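(* Let $ABC$ be a triangle with incenter $I$ and circumcenter $O$, and let $H_A, H_B, H_C$ be the orthocenters of the triangles $BIC$, $CIA$, $AIB$ respectively. Let $O_A, O_B, O_C$ be the circumcenters of the triangles $AH_BH_C$, $BH_CH_A$, $CH_AH_B$ respectively. Then the circumcenter of triangle $O_AO_BO_C$ is the reflection of $O$ in $I$. *)

theory Defs
  imports "HOL-Analysis.Analysis"
begin

type_synonym point = "real^2"

definition circumcenter :: "point \<Rightarrow> point \<Rightarrow> point \<Rightarrow> point" where
  "circumcenter A B C = (THE P. dist P A = dist P B \<and> dist P A = dist P C)"

definition orthocenter :: "point \<Rightarrow> point \<Rightarrow> point \<Rightarrow> point" where
  "orthocenter A B C = (THE H. (H - A) \<bullet> (B - C) = 0 \<and> (H - B) \<bullet> (C - A) = 0 \<and> (H - C) \<bullet> (A - B) = 0)"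

definition incenter :: "point \<Rightarrow> point \<Rightarrow> point \<Rightarrow> point" where
  "incenter A B C =
     (1 / (dist B C + dist C A + dist A B)) *\<^sub>R
       (dist B C *\<^sub>R A + dist C A *\<^sub>R B + dist A B *\<^sub>R C)"

end

theory Submission
  imports Defs
begin

text \<open>
  Work in the frame at \<open>A\<close> given by \<open>u = B - A\<close>, \<open>v = C - A\<close> and \<open>w = O - A\<close>. Apart from
  \<open>|w|\<^sup>2 = R\<^sup>2\<close>, the inner products of these vectors are determined by the side lengths
  \<open>a, b, c\<close> (\<open>w \<bullet> u = c\<^sup>2 / 2\<close> and \<open>w \<bullet> v = b\<^sup>2 / 2\<close> because \<open>O\<close> is equidistant from the
  vertices). The vector \<open>d = b u - c v\<close> is the difference of two vectors of length \<open>b c\<close>, hence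
  orthogonal to their sum, which points along the bisector \<open>AI\<close>. This gives
  \<open>H\<^sub>B = C + d / (a - b + c)\<close> and \<open>H\<^sub>C = B - d / (a + b - c)\<close>, and then
  \<open>O\<^sub>A = A + k (I - A) - 2 (O - A)\<close> with \<open>k = (2 (b + c) - a) / (b + c - a)\<close>.
  A direct computation shows that \<open>|O\<^sub>A - (2 I - O)|\<^sup>2\<close> and \<open>|I - O|\<^sup>2\<close> both equal
  \<open>R\<^sup>2 - a b c / (a + b + c) = R\<^sup>2 - 2 R r\<close>. As the configuration is invariant under the cyclic
  relabelling of \<open>A, B, C\<close>, the point \<open>2 I - O\<close> is equidistant from \<open>O\<^sub>A\<close>, \<open>O\<^sub>B\<close>, \<open>O\<^sub>C\<close>.
\<close>

definition det2 :: "point \<Rightarrow> point \<Rightarrow> real" where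
  "det2 p q = p$1 * q$2 - p$2 * q$1"

lemma inner_point_eq: "x \<bullet> y = x$1 * y$1 + x$2 * y$2" for x y :: point
  by (simp add: inner_vec_def sum_2)

lemma collinear_0_iff_det2: "collinear {0, x, y} \<longleftrightarrow> det2 x y = 0" for x y :: point
proof
  assume "collinear {0, x, y}"
  then show "det2 x y = 0"
    by (auto simp: collinear_lemma det2_def)
next
  assume det: "det2 x y = 0"
  consider "x = 0" | "x$1 \<noteq> 0" | "x$2 \<noteq> 0"
    by (metis exhaust_2 vec_eq_iff zero_index)
  then show "collinear {0, x, y}"
  proof cases
    case 2
    then have "y = (y$1 / x$1) *\<^sub>R x"
      using det by (simp add: vec_eq_iff forall_2 det2_def field_simps)
    then show ?thesis by (metis collinear_lemma)
  next
    case 3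
    then have "y = (y$2 / x$2) *\<^sub>R x"
      using det by (simp add: vec_eq_iff forall_2 det2_def field_simps)
    then show ?thesis by (metis collinear_lemma)
  qed (simp add: collinear_lemma)
qed

lemma collinear_iff_det2: "collinear {X, Y, Z} \<longleftrightarrow> det2 (Y - X) (Z - X) = 0" for X Y Z :: point
proof -
  have "collinear {X, Y, Z} \<longleftrightarrow> collinear {Y, X, Z}"
    by (simp add: insert_commute)
  also have "\<dots> \<longleftrightarrow> collinear {0, Y - X, Z - X}"
    by (simp add: collinear_3)
  finally show ?thesis
    by (simp add: collinear_0_iff_det2)
qed

lemma det2_scaleR_add:
  "det2 (x *\<^sub>R u + y *\<^sub>R v) (x' *\<^sub>R u + y' *\<^sub>R v) = (x * y' - y * x') * det2 u v"
  by (simp add: det2_def algebra_simps)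

lemma orthogonal_pair_eq_0:
  fixes w p q :: point
  assumes "det2 p q \<noteq> 0" "w \<bullet> p = 0" "w \<bullet> q = 0"
  shows "w = 0"
proof -
  have "w$1 * det2 p q = q$2 * (w \<bullet> p) - p$2 * (w \<bullet> q)"
       "w$2 * det2 p q = p$1 * (w \<bullet> q) - q$1 * (w \<bullet> p)"
    by (simp_all add: inner_point_eq det2_def algebra_simps)
  then show ?thesis
    using assms by (simp add: vec_eq_iff forall_2)
qed

lemma exists_inner_eq_pair:
  fixes p q :: point
  assumes "det2 p q \<noteq> 0"
  shows "\<exists>w. w \<bullet> p = \<alpha> \<and> w \<bullet> q = \<beta>"
proof -
  define D where "D = det2 p q"
  define w :: point
    where "w = (\<chi> i. if i = 1 then (\<alpha> * q$2 - \<beta> * p$2) / D else (\<beta> * p$1 - \<alpha> * q$1) / D)"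
  have "D \<noteq> 0"
    using assms by (simp add: D_def)
  moreover have "w \<bullet> p = ((\<alpha> * q$2 - \<beta> * p$2) * p$1 + (\<beta> * p$1 - \<alpha> * q$1) * p$2) / D"
    and "w \<bullet> q = ((\<alpha> * q$2 - \<beta> * p$2) * q$1 + (\<beta> * p$1 - \<alpha> * q$1) * q$2) / D"
    by (simp_all add: w_def inner_point_eq add_divide_distrib)
  moreover have "(\<alpha> * q$2 - \<beta> * p$2) * p$1 + (\<beta> * p$1 - \<alpha> * q$1) * p$2 = \<alpha> * D"
    and "(\<alpha> * q$2 - \<beta> * p$2) * q$1 + (\<beta> * p$1 - \<alpha> * q$1) * q$2 = \<beta> * D"
    by (simp_all add: D_def det2_def algebra_simps)
  ultimately show ?thesis
    by auto
qed

lemma dist_eq_iff_inner: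
  "dist P X = dist P Y \<longleftrightarrow> 2 * ((P - X) \<bullet> (Y - X)) = (Y - X) \<bullet> (Y - X)"
  for P X Y :: "'a::real_inner"
proof -
  have "P - Y = (P - X) - (Y - X)" by simp
  then have "(P - Y) \<bullet> (P - Y) = (P - X) \<bullet> (P - X) - 2 * ((P - X) \<bullet> (Y - X)) + (Y - X) \<bullet> (Y - X)"
    by (simp add: inner_diff_left inner_diff_right inner_commute)
  moreover have "dist P X = dist P Y \<longleftrightarrow> (P - X) \<bullet> (P - X) = (P - Y) \<bullet> (P - Y)"
    by (simp add: dist_norm norm_eq_sqrt_inner)
  ultimately show ?thesis by linarith
qed

lemma ex1_circumcenter:
  fixes X Y Z :: point
  assumes "\<not> collinear {X, Y, Z}"
  shows "\<exists>!P. dist P X = dist P Y \<and> dist P X = dist P Z"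
proof -
  have det: "det2 (Y - X) (Z - X) \<noteq> 0"
    using assms by (simp add: collinear_iff_det2)
  obtain w where "w \<bullet> (Y - X) = (Y - X) \<bullet> (Y - X) / 2" "w \<bullet> (Z - X) = (Z - X) \<bullet> (Z - X) / 2"
    using exists_inner_eq_pair[OF det] by blast
  then have "dist (X + w) X = dist (X + w) Y \<and> dist (X + w) X = dist (X + w) Z"
    by (simp add: dist_eq_iff_inner)
  moreover have "P = Q"
    if "dist P X = dist P Y \<and> dist P X = dist P Z"
      and "dist Q X = dist Q Y \<and> dist Q X = dist Q Z" for P Q
  proof -
    have "(Q - P) \<bullet> (Y - X) = 0" "(Q - P) \<bullet> (Z - X) = 0"
      using that by (simp_all add: dist_eq_iff_inner inner_diff_left)
    then have "Q - P = 0"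
      by (rule orthogonal_pair_eq_0[OF det])
    then show "P = Q"
      by simp
  qed
  ultimately show ?thesis by blast
qed

lemma circumcenter_eqI:
  fixes X Y Z P :: point
  assumes "\<not> collinear {X, Y, Z}" "dist P X = dist P Y" "dist P X = dist P Z"
  shows "circumcenter X Y Z = P"
  unfolding circumcenter_def using assms ex1_circumcenter by (blast intro: the1_equality)

lemma circumcenter_equidistant:
  fixes X Y Z :: point
  assumes "\<not> collinear {X, Y, Z}"
  shows "dist (circumcenter X Y Z) X = dist (circumcenter X Y Z) Y"
    and "dist (circumcenter X Y Z) X = dist (circumcenter X Y Z) Z"
  unfolding circumcenter_def using theI'[OF ex1_circumcenter[OF assms]] by blast+

lemma orthocenter_eqI:
  fixes X Y Z H :: point
  assumes "\<not> collinear {X, Y, Z}" "(H - X) \<bullet> (Y - Z) = 0" "(H - Y) \<bullet> (Z - X) = 0"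
  shows "orthocenter X Y Z = H"
  unfolding orthocenter_def
proof (rule the_equality)
  have "(H - X) \<bullet> (Y - Z) + (H - Y) \<bullet> (Z - X) + (H - Z) \<bullet> (X - Y) = 0"
    by (simp add: inner_diff_left inner_diff_right inner_commute)
  with assms show "(H - X) \<bullet> (Y - Z) = 0 \<and> (H - Y) \<bullet> (Z - X) = 0 \<and> (H - Z) \<bullet> (X - Y) = 0"
    by simp
  fix H' assume "(H' - X) \<bullet> (Y - Z) = 0 \<and> (H' - Y) \<bullet> (Z - X) = 0 \<and> (H' - Z) \<bullet> (X - Y) = 0"
  then have "(H' - H) \<bullet> (Y - Z) = 0" "(H' - H) \<bullet> (Z - X) = 0"
    using assms by (simp_all add: inner_diff_left)
  moreover have "det2 (Y - Z) (Z - X) \<noteq> 0"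
    using assms(1) by (simp add: collinear_iff_det2 det2_def algebra_simps)
  ultimately show "H' = H"
    using orthogonal_pair_eq_0 by fastforce
qed

lemma circumcenter_rotate: "circumcenter B C A = circumcenter A B C"
  unfolding circumcenter_def by (rule arg_cong[where f = The]) (auto simp: fun_eq_iff)

lemma incenter_rotate: "incenter B C A = incenter A B C"
  unfolding incenter_def by (simp add: dist_commute algebra_simps)

lemma incenter_swap: "incenter A C B = incenter A B C"
  unfolding incenter_def by (simp add: dist_commute algebra_simps)

lemma orthocenter_reverse: "orthocenter Z Y X = orthocenter X Y Z"
  unfolding orthocenter_def
  by (rule arg_cong[where f = The]) (auto simp: fun_eq_iff inner_diff_right)

lemma dist_triangle_strict_noncollinear:
  fixes A B C :: "'a::euclidean_space"
  assumes "\<not> collinear {A, B, C}"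
  shows "dist A C < dist A B + dist B C"
proof -
  have "\<not> between (A, C) B"
    using assms between_imp_collinear by metis
  then show ?thesis
    using dist_triangle[of A C B] by (simp add: between dist_commute)
qed

lemma incenter_eq:
  fixes A B C :: point
  defines "a \<equiv> dist B C" and "b \<equiv> dist C A" and "c \<equiv> dist A B"
  assumes "a + b + c \<noteq> 0"
  shows "incenter A B C = A + (1 / (a + b + c)) *\<^sub>R (b *\<^sub>R (B - A) + c *\<^sub>R (C - A))"
proof -
  have "a *\<^sub>R A + b *\<^sub>R B + c *\<^sub>R C = (a + b + c) *\<^sub>R A + (b *\<^sub>R (B - A) + c *\<^sub>R (C - A))"
    by (simp add: algebra_simps)
  then show ?thesis
    using assms by (simp add: incenter_def a_def b_def c_def scaleR_add_right)
qed

lemma triangle_inequalities_strict: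
  fixes A B C :: "'a::euclidean_space"
  assumes "\<not> collinear {A, B, C}"
  shows "dist B C < dist C A + dist A B"
    and "dist C A < dist A B + dist B C"
    and "dist A B < dist B C + dist C A"
  using assms dist_triangle_strict_noncollinear[of B A C]
    dist_triangle_strict_noncollinear[of C B A] dist_triangle_strict_noncollinear[of A C B]
  by (simp_all add: insert_commute dist_commute add.commute)

lemma triangle_gram:
  fixes A B C :: point
  assumes ABC: "\<not> collinear {A, B, C}"
  defines "a \<equiv> dist B C" and "b \<equiv> dist C A" and "c \<equiv> dist A B"
    and "u \<equiv> B - A" and "v \<equiv> C - A" and "w \<equiv> circumcenter A B C - A"
  shows "u \<bullet> u = c\<^sup>2" "v \<bullet> v = b\<^sup>2"
    and "u \<bullet> v = (b\<^sup>2 + c\<^sup>2 - a\<^sup>2) / 2" "v \<bullet> u = (b\<^sup>2 + c\<^sup>2 - a\<^sup>2) / 2"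
    and "u \<bullet> w = c\<^sup>2 / 2" "w \<bullet> u = c\<^sup>2 / 2" "v \<bullet> w = b\<^sup>2 / 2" "w \<bullet> v = b\<^sup>2 / 2"
proof -
  show uu: "u \<bullet> u = c\<^sup>2" and vv: "v \<bullet> v = b\<^sup>2"
    by (simp_all add: u_def v_def b_def c_def dist_norm norm_minus_commute
        flip: power2_norm_eq_inner)
  show "u \<bullet> v = (b\<^sup>2 + c\<^sup>2 - a\<^sup>2) / 2" "v \<bullet> u = (b\<^sup>2 + c\<^sup>2 - a\<^sup>2) / 2"
    using dot_norm_neg[of u v] uu vv
    by (simp_all add: u_def v_def a_def dist_norm inner_commute flip: power2_norm_eq_inner)
  have "2 * (w \<bullet> u) = u \<bullet> u" "2 * (w \<bullet> v) = v \<bullet> v"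
    using circumcenter_equidistant[OF ABC] unfolding dist_eq_iff_inner u_def v_def w_def .
  then show "u \<bullet> w = c\<^sup>2 / 2" "w \<bullet> u = c\<^sup>2 / 2" "v \<bullet> w = b\<^sup>2 / 2" "w \<bullet> v = b\<^sup>2 / 2"
    using uu vv by (simp_all add: inner_commute)
qed

lemma inner_incenter_vertex:
  fixes A B C :: point
  assumes ABC: "\<not> collinear {A, B, C}"
  defines "a \<equiv> dist B C" and "b \<equiv> dist C A" and "c \<equiv> dist A B"
    and "I \<equiv> incenter A B C" and "Oc \<equiv> circumcenter A B C"
  shows "(I - A) \<bullet> (B - A) = c * (b + c - a) / 2"
    and "(I - A) \<bullet> (C - A) = b * (b + c - a) / 2"
    and "(I - A) \<bullet> (b *\<^sub>R (B - A) - c *\<^sub>R (C - A)) = 0"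
    and "(I - A) \<bullet> (I - A) = b * c * (b + c - a) / (a + b + c)"
    and "(I - A) \<bullet> (Oc - A) = b * c * (b + c) / (2 * (a + b + c))"
proof -
  define u v w where "u = B - A" and "v = C - A" and "w = Oc - A"
  define s where "s = a + b + c"
  have "s > 0"
    using triangle_inequalities_strict[OF ABC] by (simp add: s_def a_def b_def c_def)
  note gram = triangle_gram[OF ABC, folded a_def b_def c_def u_def v_def Oc_def w_def]
  have I: "I - A = (1 / s) *\<^sub>R (b *\<^sub>R u + c *\<^sub>R v)"
    using \<open>s > 0\<close> incenter_eq[where A = A and B = B and C = C]
    by (simp add: I_def s_def a_def b_def c_def u_def v_def dist_commute)
  show "(I - A) \<bullet> (B - A) = c * (b + c - a) / 2"
    unfolding I u_def[symmetric] using \<open>s > 0\<close>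
    by (simp add: inner_add_left gram) (simp add: field_simps power2_eq_square s_def)
  show "(I - A) \<bullet> (C - A) = b * (b + c - a) / 2"
    unfolding I v_def[symmetric] using \<open>s > 0\<close>
    by (simp add: inner_add_left gram) (simp add: field_simps power2_eq_square s_def)
  show "(I - A) \<bullet> (b *\<^sub>R (B - A) - c *\<^sub>R (C - A)) = 0"
    unfolding I u_def[symmetric] v_def[symmetric]
    by (simp add: inner_add_left inner_diff_right gram algebra_simps power2_eq_square)
  show "(I - A) \<bullet> (I - A) = b * c * (b + c - a) / (a + b + c)"
    unfolding I s_def[symmetric] using \<open>s > 0\<close>
    by (simp add: inner_add_left inner_add_right gram)
      (simp add: field_simps power2_eq_square, simp add: s_def algebra_simps)
  show "(I - A) \<bullet> (Oc - A) = b * c * (b + c) / (2 * (a + b + c))"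
    unfolding I w_def[symmetric] s_def[symmetric] using \<open>s > 0\<close>
    by (simp add: inner_add_left gram) (simp add: field_simps power2_eq_square)
qed

lemma inner_bisector_normal:
  fixes A B C :: point
  assumes ABC: "\<not> collinear {A, B, C}"
  defines "a \<equiv> dist B C" and "b \<equiv> dist C A" and "c \<equiv> dist A B"
    and "d \<equiv> dist C A *\<^sub>R (B - A) - dist A B *\<^sub>R (C - A)"
  shows "(B - A) \<bullet> d = c * (a - b + c) * (a + b - c) / 2"
    and "(C - A) \<bullet> d = - (b * (a - b + c) * (a + b - c) / 2)"
    and "d \<bullet> d = b * c * (a - b + c) * (a + b - c)"
    and "(circumcenter A B C - A) \<bullet> d = b * c * (c - b) / 2"
proof -
  define u v w where "u = B - A" and "v = C - A" and "w = circumcenter A B C - A"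
  note gram = triangle_gram[OF ABC, folded a_def b_def c_def u_def v_def w_def]
  have d: "d = b *\<^sub>R u - c *\<^sub>R v"
    by (simp add: d_def u_def v_def b_def c_def)
  show "(B - A) \<bullet> d = c * (a - b + c) * (a + b - c) / 2"
    unfolding d u_def[symmetric]
    by (simp add: inner_diff_right gram) (simp add: field_simps power2_eq_square)
  show "(C - A) \<bullet> d = - (b * (a - b + c) * (a + b - c) / 2)"
    unfolding d v_def[symmetric]
    by (simp add: inner_diff_right gram) (simp add: field_simps power2_eq_square)
  show "d \<bullet> d = b * c * (a - b + c) * (a + b - c)"
    unfolding d
    by (simp add: inner_diff_left inner_diff_right gram) (simp add: field_simps power2_eq_square)
  show "(circumcenter A B C - A) \<bullet> d = b * c * (c - b) / 2"
    unfolding d w_def[symmetric]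
    by (simp add: inner_diff_right gram) (simp add: field_simps power2_eq_square)
qed

lemma orthocenter_incenter_vertex:
  fixes A B C :: point
  assumes ABC: "\<not> collinear {A, B, C}"
  defines "a \<equiv> dist B C" and "b \<equiv> dist C A" and "c \<equiv> dist A B"
  shows "orthocenter C (incenter A B C) A =
    C + (1 / (a - b + c)) *\<^sub>R (b *\<^sub>R (B - A) - c *\<^sub>R (C - A))"
proof -
  define I u v t d where "I = incenter A B C" and "u = B - A" and "v = C - A" and "t = I - A"
    and "d = b *\<^sub>R u - c *\<^sub>R v"
  define q s where "q = a - b + c" and "s = a + b + c"
  have "a < b + c" "b < c + a" "c < a + b"
    using triangle_inequalities_strict[OF ABC] by (simp_all add: a_def b_def c_def)
  then have "b > 0" "q \<noteq> 0" "s > 0"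
    by (simp_all add: q_def s_def)
  note gram = triangle_gram[OF ABC, folded a_def b_def c_def u_def v_def]
  note incenter = inner_incenter_vertex[OF ABC, folded a_def b_def c_def I_def u_def v_def t_def,
      folded d_def]
  note normal = inner_bisector_normal[OF ABC, folded a_def b_def c_def u_def v_def, folded d_def]
  have t: "t = (b / s) *\<^sub>R u + (c / s) *\<^sub>R v"
    using \<open>s > 0\<close> incenter_eq[where A = A and B = B and C = C]
    by (simp add: t_def I_def s_def a_def b_def c_def u_def v_def dist_commute scaleR_add_right)
  show ?thesis
    unfolding I_def[symmetric] q_def[symmetric]
  proof (rule orthocenter_eqI)
    have "det2 t v \<noteq> 0"
      using \<open>b > 0\<close> \<open>s > 0\<close> ABC det2_scaleR_add[of "b / s" u "c / s" v 0 1]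
      by (simp add: t collinear_iff_det2 u_def v_def)
    then have "\<not> collinear {A, I, C}"
      by (simp add: collinear_iff_det2 t_def v_def)
    then show "\<not> collinear {C, I, A}"
      by (simp add: insert_commute)
    show "(C + (1 / q) *\<^sub>R (b *\<^sub>R (B - A) - c *\<^sub>R (C - A)) - C) \<bullet> (I - A) = 0"
      using incenter(3) by (simp flip: u_def v_def t_def d_def add: inner_commute)
    have "C + (1 / q) *\<^sub>R (b *\<^sub>R (B - A) - c *\<^sub>R (C - A)) - I = v + (1 / q) *\<^sub>R d - t"
      by (simp add: v_def t_def d_def u_def)
    moreover have "A - C = - v"
      by (simp add: v_def)
    moreover have "(v + (1 / q) *\<^sub>R d - t) \<bullet> v = 0"
      using \<open>q \<noteq> 0\<close>
      by (simp add: inner_diff_left inner_add_left gram incenter normal inner_commute[of d v])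
        (simp add: field_simps power2_eq_square q_def)
    ultimately show "(C + (1 / q) *\<^sub>R (b *\<^sub>R (B - A) - c *\<^sub>R (C - A)) - I) \<bullet> (A - C) = 0"
      by simp
  qed
qed

lemma circumcenter_vertex_orthocenters:
  fixes A B C :: point
  assumes ABC: "\<not> collinear {A, B, C}"
  defines "a \<equiv> dist B C" and "b \<equiv> dist C A" and "c \<equiv> dist A B"
    and "I \<equiv> incenter A B C" and "Oc \<equiv> circumcenter A B C"
  assumes nondeg: "\<not> collinear {A, orthocenter C I A, orthocenter A I B}"
  shows "circumcenter A (orthocenter C I A) (orthocenter A I B) =
    A + ((2 * (b + c) - a) / (b + c - a)) *\<^sub>R (I - A) - 2 *\<^sub>R (Oc - A)"
proof -
  define u v w t d where "u = B - A" and "v = C - A" and "w = Oc - A" and "t = I - A"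
    and "d = b *\<^sub>R u - c *\<^sub>R v"
  define p q r where "p = b + c - a" and "q = a - b + c" and "r = a + b - c"
  define k where "k = (2 * (b + c) - a) / p"
  have "a < b + c" "b < c + a" "c < a + b"
    using triangle_inequalities_strict[OF ABC] by (simp_all add: a_def b_def c_def)
  then have nz: "p \<noteq> 0" "q \<noteq> 0" "r \<noteq> 0"
    by (simp_all add: p_def q_def r_def)
  note gram = triangle_gram[OF ABC, folded a_def b_def c_def u_def v_def Oc_def, folded w_def]
  note incenter = inner_incenter_vertex[OF ABC, folded a_def b_def c_def I_def Oc_def u_def v_def,
      folded t_def w_def d_def]
  note normal = inner_bisector_normal[OF ABC, folded a_def b_def c_def u_def v_def Oc_def,
      folded w_def d_def]
  have HB: "orthocenter C I A - A = v + (1 / q) *\<^sub>R d"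
    using orthocenter_incenter_vertex[OF ABC, folded a_def b_def c_def I_def u_def v_def,
        folded q_def d_def]
    by (simp add: v_def)
  have ACB: "\<not> collinear {A, C, B}"
    using ABC by (simp add: insert_commute)
  have dists: "dist C B = a" "dist B A = c" "dist A C = b" "a - c + b = r"
    by (simp_all add: a_def b_def c_def r_def dist_commute)
  have "orthocenter A I B = orthocenter B (incenter A C B) A"
    unfolding I_def incenter_swap[of A B C] by (rule orthocenter_reverse)
  also have "\<dots> = B + (1 / r) *\<^sub>R (c *\<^sub>R (C - A) - b *\<^sub>R (B - A))"
    using orthocenter_incenter_vertex[OF ACB] unfolding dists .
  finally have HC: "orthocenter A I B - A = u - (1 / r) *\<^sub>R d"
    by (simp add: u_def v_def d_def algebra_simps)
  define P where "P = A + k *\<^sub>R t - 2 *\<^sub>R w"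
  have P: "P - A = k *\<^sub>R t - 2 *\<^sub>R w"
    by (simp add: P_def)
  have "2 * ((k *\<^sub>R t - 2 *\<^sub>R w) \<bullet> (v + (1 / q) *\<^sub>R d)) =
      (v + (1 / q) *\<^sub>R d) \<bullet> (v + (1 / q) *\<^sub>R d)"
    by (simp add: inner_diff_left inner_add_left inner_add_right gram incenter normal
        inner_commute[of d v])
      (simp add: field_simps nz power2_eq_square k_def, simp add: p_def q_def algebra_simps)
  then have "dist P A = dist P (orthocenter C I A)"
    unfolding dist_eq_iff_inner P HB .
  moreover have "2 * ((k *\<^sub>R t - 2 *\<^sub>R w) \<bullet> (u - (1 / r) *\<^sub>R d)) =
      (u - (1 / r) *\<^sub>R d) \<bullet> (u - (1 / r) *\<^sub>R d)"
    by (simp add: inner_diff_left inner_diff_right gram incenter normal inner_commute[of d u])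
      (simp add: field_simps nz power2_eq_square k_def, simp add: p_def r_def algebra_simps)
  then have "dist P A = dist P (orthocenter A I B)"
    unfolding dist_eq_iff_inner P HC .
  ultimately show ?thesis
    using circumcenter_eqI[OF nondeg] by (simp add: P_def k_def p_def t_def w_def)
qed

lemma dist_reflection_circumcenter_vertex:
  fixes A B C :: point
  assumes ABC: "\<not> collinear {A, B, C}"
  defines "I \<equiv> incenter A B C" and "Oc \<equiv> circumcenter A B C"
  assumes nondeg: "\<not> collinear {A, orthocenter C I A, orthocenter A I B}"
  shows "dist (2 *\<^sub>R I - Oc) (circumcenter A (orthocenter C I A) (orthocenter A I B)) = dist I Oc"
proof -
  define a b c where "a = dist B C" and "b = dist C A" and "c = dist A B"
  define t w where "t = I - A" and "w = Oc - A"
  define p s where "p = b + c - a" and "s = a + b + c"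
  have "a < b + c" "b < c + a" "c < a + b"
    using triangle_inequalities_strict[OF ABC] by (simp_all add: a_def b_def c_def)
  then have nz: "p \<noteq> 0" "s \<noteq> 0"
    by (simp_all add: p_def s_def)
  note incenter = inner_incenter_vertex(4,5)[OF ABC, folded a_def b_def c_def I_def Oc_def,
      folded t_def w_def s_def]
  define X where "X = circumcenter A (orthocenter C I A) (orthocenter A I B)"
  have "(2 * (b + c) - a) / p = 2 + a / p"
    using nz by (simp add: p_def field_simps)
  then have X: "X = A + (2 + a / p) *\<^sub>R t - 2 *\<^sub>R w"
    using circumcenter_vertex_orthocenters[OF ABC nondeg[unfolded I_def]]
    unfolding X_def p_def t_def w_def a_def b_def c_def I_def Oc_def by simp
  have "I = A + t" "Oc = A + w"
    by (simp_all add: t_def w_def)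
  then have reflection_X: "2 *\<^sub>R I - Oc - X = w - (a / p) *\<^sub>R t"
    unfolding X by (simp add: algebra_simps scaleR_2)
  have "(w - (a / p) *\<^sub>R t) \<bullet> (w - (a / p) *\<^sub>R t) = (t - w) \<bullet> (t - w)"
    by (simp add: inner_diff_left inner_diff_right incenter inner_commute[of w t])
      (simp add: field_simps nz power2_eq_square, simp add: p_def s_def algebra_simps)
  then have "dist (2 *\<^sub>R I - Oc) X = norm (t - w)"
    by (simp only: dist_norm reflection_X norm_eq_sqrt_inner)
  then show ?thesis
    by (simp add: X_def t_def w_def dist_norm)
qed

theorem proposition5p5:
  fixes A B C :: point
  assumes "\<not> collinear {A, B, C}"
  defines "I \<equiv> incenter A B C"
      and "Oc \<equiv> circumcenter A B C"
  defines "HA \<equiv> orthocenter B I C"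
      and "HB \<equiv> orthocenter C I A"
      and "HC \<equiv> orthocenter A I B"
  defines "OA \<equiv> circumcenter A HB HC"
      and "OB \<equiv> circumcenter B HC HA"
      and "OC \<equiv> circumcenter C HA HB"
  assumes "\<not> collinear {A, HB, HC}"
      and "\<not> collinear {B, HC, HA}"
      and "\<not> collinear {C, HA, HB}"
      and "\<not> collinear {OA, OB, OC}"
  shows "circumcenter OA OB OC = 2 *\<^sub>R I - Oc"
proof -
  have BCA: "\<not> collinear {B, C, A}" and CAB: "\<not> collinear {C, A, B}"
    using \<open>\<not> collinear {A, B, C}\<close> by (simp_all add: insert_commute)
  have rotate: "incenter B C A = I" "incenter C A B = I"
      "circumcenter B C A = Oc" "circumcenter C A B = Oc"
    unfolding I_def Oc_def
    by (simp_all only: incenter_rotate[of B C A] incenter_rotate[of C A B]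
        circumcenter_rotate[of B C A] circumcenter_rotate[of C A B])
  have "dist (2 *\<^sub>R I - Oc) OA = dist I Oc"
    using dist_reflection_circumcenter_vertex[OF \<open>\<not> collinear {A, B, C}\<close>] \<open>\<not> collinear {A, HB, HC}\<close>
    unfolding OA_def HB_def HC_def I_def Oc_def by blast
  moreover have "dist (2 *\<^sub>R I - Oc) OB = dist I Oc"
    using dist_reflection_circumcenter_vertex[OF BCA] \<open>\<not> collinear {B, HC, HA}\<close>
    unfolding rotate OB_def HC_def HA_def by blast
  moreover have "dist (2 *\<^sub>R I - Oc) OC = dist I Oc"
    using dist_reflection_circumcenter_vertex[OF CAB] \<open>\<not> collinear {C, HA, HB}\<close>
    unfolding rotate OC_def HA_def HB_def by blast
  ultimately show ?thesis
    using circumcenter_eqI[OF \<open>\<not> collinear {OA, OB, OC}\<close>] by (simp add: dist_commute)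
qed

end
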